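(* Let $U$ be a finite nonempty set and $R$ an equivalence relation on $U$. Let $\mathbf{S}(R)=\{X\subseteq U \mid R^{*}(X)=U\}$ and let $\mathbf{I}(R)=\{X\subseteq U \mid X\subseteq S \text{ for some inclusion-minimal member } S \text{ of } \mathbf{S}(R)\}$ be the family of independent sets of the support matroid $M(R)=(U,\mathbf{I}(R))$. Then $$\mathbf{I}(R)=\{X\subseteq U \mid \forall x\in U,\ |RN(x)\cap X|\leq 1\}.$$
   Context: For $x\in U$, $RN(x)=\{y\in U\mid xRy\}$ is the equivalence class of $x$. The upper approximation of $X\subseteq U$ is $R^{*}(X)=\{x\in U\mid RN(x)\cap X\neq\emptyset\}$. The support matroid $M(R)$ induced by $R$ is the matroid on $U$ whose independent sets are the subsets of inclusion-minimal members of $\mathbf{S}(R)$; its support sets (subsets of $U$ containing a base, i.e. a maximal independent set) are exactly the members of $\mathbf{S}(R)$. *)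

theory Defs
  imports Main
begin

definition RN :: "('a \<times> 'a) set \<Rightarrow> 'a \<Rightarrow> 'a set" where
  "RN R x = R `` {x}"

definition upper_approx :: "'a set \<Rightarrow> ('a \<times> 'a) set \<Rightarrow> 'a set \<Rightarrow> 'a set" where
  "upper_approx U R X = {x \<in> U. RN R x \<inter> X \<noteq> {}}"

definition support_sets :: "'a set \<Rightarrow> ('a \<times> 'a) set \<Rightarrow> 'a set set" where
  "support_sets U R = {X. X \<subseteq> U \<and> upper_approx U R X = U}"

definition indep_sets :: "'a set \<Rightarrow> ('a \<times> 'a) set \<Rightarrow> 'a set set" where
  "indep_sets U R = {X. X \<subseteq> U \<and> (\<exists>S \<in> support_sets U R.
      (\<forall>T \<in> support_sets U R. T \<subseteq> S \<longrightarrow> T = S) \<and> X \<subseteq> S)}"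

end

theory Submission
  imports Defs
begin

text \<open>A support set meets every equivalence class. It is minimal exactly when it meets each class
  only once: a second point b in the class of a can be dropped, because a still covers that class.
  Hence the independent sets are the sets meeting each class at most once, as every such set can be
  completed to a minimal support set by adding a representative of each class it misses.\<close>

definition partial_transversal :: "('a \<times> 'a) set \<Rightarrow> 'a set \<Rightarrow> bool" where
  "partial_transversal R X \<longleftrightarrow> (\<forall>a\<in>X. \<forall>b\<in>X. (a, b) \<in> R \<longrightarrow> a = b)"

definition minimal_support_sets :: "'a set \<Rightarrow> ('a \<times> 'a) set \<Rightarrow> 'a set set" where
  "minimal_support_sets U R =
     {S \<in> support_sets U R. \<forall>T \<in> support_sets U R. T \<subseteq> S \<longrightarrow> T = S}"

lemma indep_sets_eq_subsets_of_minimal: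
  "indep_sets U R = {X. X \<subseteq> U \<and> (\<exists>S \<in> minimal_support_sets U R. X \<subseteq> S)}"
  unfolding indep_sets_def minimal_support_sets_def by blast

lemma support_sets_iff:
  "S \<in> support_sets U R \<longleftrightarrow> S \<subseteq> U \<and> (\<forall>x\<in>U. RN R x \<inter> S \<noteq> {})"
  unfolding support_sets_def upper_approx_def by blast

lemma partial_transversal_subset:
  "partial_transversal R S \<Longrightarrow> X \<subseteq> S \<Longrightarrow> partial_transversal R X"
  unfolding partial_transversal_def by blast

lemma related_iff_in_common_class:
  assumes "equiv U R" and "a \<in> U"
  shows "(a, b) \<in> R \<longleftrightarrow> (\<exists>x\<in>U. a \<in> RN R x \<and> b \<in> RN R x)"
proof
  assume "(a, b) \<in> R"
  moreover have "(a, a) \<in> R"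
    using assms unfolding equiv_def refl_on_def by blast
  ultimately show "\<exists>x\<in>U. a \<in> RN R x \<and> b \<in> RN R x"
    using assms(2) unfolding RN_def by blast
next
  assume "\<exists>x\<in>U. a \<in> RN R x \<and> b \<in> RN R x"
  then obtain x where "(x, a) \<in> R" "(x, b) \<in> R"
    unfolding RN_def by blast
  then show "(a, b) \<in> R"
    using assms(1) unfolding equiv_def by (meson symD transD)
qed

lemma partial_transversal_iff_card_le_1:
  assumes "equiv U R" and "finite U" and "X \<subseteq> U"
  shows "partial_transversal R X \<longleftrightarrow> (\<forall>x\<in>U. card (RN R x \<inter> X) \<le> 1)"
proof -
  have "finite X" using assms(3,2) by (rule finite_subset)
  then have card_iff: "card (RN R x \<inter> X) \<le> 1 \<longleftrightarrow> (\<forall>a\<in>RN R x \<inter> X. \<forall>b\<in>RN R x \<inter> X. a = b)" for x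
    by (simp add: card_le_Suc0_iff_eq)
  show ?thesis
    unfolding card_iff partial_transversal_def
    using related_iff_in_common_class[OF assms(1)] assms(3) by (smt (verit) IntD1 IntD2 IntI subsetD)
qed

lemma minimal_support_set_is_partial_transversal:
  assumes "equiv U R" and "S \<in> minimal_support_sets U R"
  shows "partial_transversal R S"
  unfolding partial_transversal_def
proof (intro ballI impI, rule ccontr)
  fix a b assume a: "a \<in> S" and b: "b \<in> S" and ab: "(a, b) \<in> R" and "a \<noteq> b"
  have S: "S \<in> support_sets U R"
    using assms(2) unfolding minimal_support_sets_def by blast
  have "S - {b} \<in> support_sets U R"
    unfolding support_sets_iff
  proof (intro conjI ballI)
    show "S - {b} \<subseteq> U" using S[unfolded support_sets_iff] by blast
  next
    fix y assume "y \<in> U"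
    then obtain c where c: "c \<in> RN R y" "c \<in> S"
      using S[unfolded support_sets_iff] by blast
    show "RN R y \<inter> (S - {b}) \<noteq> {}"
    proof (cases "c = b")
      case True
      with c have "(y, b) \<in> R" unfolding RN_def by simp
      with ab have "(y, a) \<in> R"
        using assms(1) unfolding equiv_def by (blast dest: symD transD)
      then have "a \<in> RN R y" unfolding RN_def by simp
      then show ?thesis using a \<open>a \<noteq> b\<close> by blast
    qed (use c in blast)
  qed
  then show False
    using assms(2) b unfolding minimal_support_sets_def by blast
qed

lemma partial_transversal_support_set_is_minimal:
  assumes "equiv U R" and "S \<in> support_sets U R" and "partial_transversal R S"
  shows "S \<in> minimal_support_sets U R"
  unfolding minimal_support_sets_def
proof (intro CollectI conjI ballI impI assms(2))
  fix T assume T: "T \<in> support_sets U R" and "T \<subseteq> S"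
  have "z \<in> T" if "z \<in> S" for z
  proof -
    have "z \<in> U" using that assms(2)[unfolded support_sets_iff] by blast
    then obtain t where "(z, t) \<in> R" "t \<in> T"
      using T[unfolded support_sets_iff] unfolding RN_def by blast
    with that \<open>T \<subseteq> S\<close> assms(3) have "t = z"
      unfolding partial_transversal_def by blast
    with \<open>t \<in> T\<close> show "z \<in> T" by simp
  qed
  with \<open>T \<subseteq> S\<close> show "T = S" by blast
qed

lemma minimal_support_sets_eq:
  assumes "equiv U R"
  shows "minimal_support_sets U R = {S \<in> support_sets U R. partial_transversal R S}"
proof (intro set_eqI iffI)
  fix S assume "S \<in> minimal_support_sets U R"
  then show "S \<in> {S \<in> support_sets U R. partial_transversal R S}"
    using minimal_support_set_is_partial_transversal[OF assms]
    unfolding minimal_support_sets_def by blast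
qed (use partial_transversal_support_set_is_minimal[OF assms] in blast)

lemma partial_transversal_extends_to_support_set:
  assumes "equiv U R" and "X \<subseteq> U" and "partial_transversal R X"
  obtains S where "X \<subseteq> S" and "S \<in> support_sets U R" and "partial_transversal R S"
proof -
  define rep where "rep C = (SOME z. z \<in> C)" for C :: "'a set"
  define S where "S = X \<union> rep ` {C \<in> U // R. C \<inter> X = {}}"
  have rep_in: "rep C \<in> C" if "C \<in> U // R" for C
    unfolding rep_def using in_quotient_imp_non_empty[OF assms(1) that] by (simp add: some_in_eq)
  have class_rep: "R `` {rep C} = C" if C: "C \<in> U // R" for C
  proof -
    obtain x where x: "C = R `` {x}" using C unfolding quotient_def by blast
    with rep_in[OF C] have "(x, rep C) \<in> R" by simp
    with x show ?thesis using equiv_class_eq[OF assms(1)] by simp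
  qed
  have added: "a = rep (R `` {a}) \<and> R `` {a} \<inter> X = {}" if "a \<in> S - X" for a
  proof -
    from that obtain C where C: "C \<in> U // R" "C \<inter> X = {}" and "a = rep C"
      unfolding S_def by blast
    with class_rep[OF C(1)] show ?thesis by simp
  qed
  have "S \<in> support_sets U R"
    unfolding support_sets_iff
  proof (intro conjI ballI)
    show "S \<subseteq> U"
      unfolding S_def using assms(2) rep_in in_quotient_imp_subset[OF assms(1)] by blast
  next
    fix y assume "y \<in> U"
    then have "R `` {y} \<in> U // R" by (rule quotientI)
    then show "RN R y \<inter> S \<noteq> {}"
      unfolding S_def RN_def using rep_in by blast
  qed
  moreover have "partial_transversal R S"
    unfolding partial_transversal_def
  proof (intro ballI impI)
    fix a b assume "a \<in> S" "b \<in> S" and ab: "(a, b) \<in> R"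
    have ba: "(b, a) \<in> R" using ab assms(1) unfolding equiv_def by (blast dest: symD)
    consider "a \<in> X" "b \<in> X" | "b \<in> S - X" | "a \<in> S - X"
      using \<open>a \<in> S\<close> \<open>b \<in> S\<close> by blast
    then show "a = b"
    proof cases
      case 1
      then show ?thesis using ab assms(3) unfolding partial_transversal_def by blast
    next
      case 2
      show ?thesis
      proof (cases "a \<in> X")
        case True
        then show ?thesis using added[OF 2] ba by blast
      next
        case False
        then have "R `` {a} = R `` {b}" using equiv_class_eq[OF assms(1) ab] by simp
        then show ?thesis using added[OF 2] added[of a] \<open>a \<in> S\<close> False by auto
      qed
    next
      case 3
      show ?thesis
      proof (cases "b \<in> X")
        case True
        then show ?thesis using added[OF 3] ab by blast
      next
        case False
        then have "R `` {a} = R `` {b}" using equiv_class_eq[OF assms(1) ab] by simp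
        then show ?thesis using added[OF 3] added[of b] \<open>b \<in> S\<close> False by auto
      qed
    qed
  qed
  ultimately show thesis
    using that unfolding S_def by blast
qed

theorem theorem1:
  fixes U :: "'a set" and R :: "('a \<times> 'a) set"
  assumes "finite U" and "U \<noteq> {}" and "equiv U R"
  shows "indep_sets U R = {X. X \<subseteq> U \<and> (\<forall>x \<in> U. card (RN R x \<inter> X) \<le> 1)}"
proof -
  have "indep_sets U R = {X. X \<subseteq> U \<and> partial_transversal R X}"
  proof (intro set_eqI iffI)
    fix X assume "X \<in> indep_sets U R"
    then obtain S where "X \<subseteq> U" "X \<subseteq> S" "partial_transversal R S"
      unfolding indep_sets_eq_subsets_of_minimal minimal_support_sets_eq[OF assms(3)] by blast
    then show "X \<in> {X. X \<subseteq> U \<and> partial_transversal R X}"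
      using partial_transversal_subset by blast
  next
    fix X assume X: "X \<in> {X. X \<subseteq> U \<and> partial_transversal R X}"
    then obtain S where "X \<subseteq> S" "S \<in> support_sets U R" "partial_transversal R S"
      using partial_transversal_extends_to_support_set[OF assms(3)] by blast
    with X show "X \<in> indep_sets U R"
      unfolding indep_sets_eq_subsets_of_minimal minimal_support_sets_eq[OF assms(3)] by blast
  qed
  also have "\<dots> = {X. X \<subseteq> U \<and> (\<forall>x \<in> U. card (RN R x \<inter> X) \<le> 1)}"
    using partial_transversal_iff_card_le_1[OF assms(3,1)] by blast
  finally show ?thesis .
qed

end
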